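(* Let $(X,d,\mu)$ be a complete metric measure space with $\mu$ a doubling Borel regular measure, let $\Omega\subset X$ be a bounded domain, let $0<s<1$, and let $F\subset X$ be a measurable set with $F\setminus\Omega\neq\emptyset$. If $\mathcal{A}(F)\ne\emptyset$, then there exists a minimizer of $\mathcal{J}^s_\Omega$.
   Context: $\mu$ is doubling if there is $C_\mu\ge1$ with $0<\mu(B(x,2r))\le C_\mu\mu(B(x,r))<\infty$ for all $x,r$. A domain is a connected open set. Let $K_s(x,y)=\frac{2}{d(x,y)^s[\mu(B(x,d(x,y)))+\mu(B(y,d(x,y)))]}$, $L_s(A,B)=\int_A\int_BK_s(x,y)\,d\mu(y)\,d\mu(x)$, and $\mathcal{J}^s_\Omega(E)=L_s(E\cap\Omega,X\setminus E)+L_s(E\setminus\Omega,\Omega\setminus E)$. Let $\mathcal{A}(F)=\{E\subset X\text{ measurable}:E\setminus\Omega=F\setminus\Omega,\ \mathcal{J}^s_\Omega(E)<\infty\}$. A measurable $E$ is a minimizer of $\mathcal{J}^s_\Omega$ (with respect to $F$) if $\mathcal{J}^s_\Omega(E)<\infty$, $E\setminus\Omega=F\setminus\Omega$, and $\mathcal{J}^s_\Omega(E)\le\mathcal{J}^s_\Omega(E')$ for all measurable $E'$ with $E'\setminus\Omega=F\setminus\Omega$. *)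

theory Defs
  imports "HOL-Analysis.Analysis"
begin

text \<open>The metric measure space is the whole type 'a (X = UNIV) with measure M.\<close>

definition doubling_measure :: "('a::metric_space) measure \<Rightarrow> bool" where
  "doubling_measure M \<longleftrightarrow> (\<exists>C::real. C \<ge> 1 \<and>
     (\<forall>x r. r > 0 \<longrightarrow>
        0 < emeasure M (ball x (2*r)) \<and>
        emeasure M (ball x (2*r)) \<le> ennreal C * emeasure M (ball x r) \<and>
        emeasure M (ball x r) < \<infinity>))"

definition borel_regular :: "('a::metric_space) measure \<Rightarrow> bool" where
  "borel_regular M \<longleftrightarrow> sets borel \<subseteq> sets M \<and>
     (\<forall>A\<in>sets M. \<exists>B\<in>sets borel. A \<subseteq> B \<and> emeasure M B = emeasure M A)"

definition domain :: "('a::topological_space) set \<Rightarrow> bool" where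
  "domain \<Omega> \<longleftrightarrow> open \<Omega> \<and> connected \<Omega>"

text \<open>Kernel K_s; on the diagonal the formula gives 2/0, taken as \<infinity>.\<close>
definition Kern :: "('a::metric_space) measure \<Rightarrow> real \<Rightarrow> 'a \<Rightarrow> 'a \<Rightarrow> ennreal" where
  "Kern M s x y = (if x = y then \<infinity> else
     ennreal (2 / (dist x y powr s *
        (measure M (ball x (dist x y)) + measure M (ball y (dist x y))))))"

definition Ls :: "('a::metric_space) measure \<Rightarrow> real \<Rightarrow> 'a set \<Rightarrow> 'a set \<Rightarrow> ennreal" where
  "Ls M s A B = (\<integral>\<^sup>+ x \<in> A. (\<integral>\<^sup>+ y \<in> B. Kern M s x y \<partial>M) \<partial>M)"

definition Js :: "('a::metric_space) measure \<Rightarrow> real \<Rightarrow> 'a set \<Rightarrow> 'a set \<Rightarrow> ennreal" where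
  "Js M s \<Omega> E = Ls M s (E \<inter> \<Omega>) (UNIV - E) + Ls M s (E - \<Omega>) (\<Omega> - E)"

definition admissible :: "('a::metric_space) measure \<Rightarrow> real \<Rightarrow> 'a set \<Rightarrow> 'a set \<Rightarrow> 'a set set" where
  "admissible M s \<Omega> F = {E \<in> sets M. E - \<Omega> = F - \<Omega> \<and> Js M s \<Omega> E < \<infinity>}"

definition is_minimizer :: "('a::metric_space) measure \<Rightarrow> real \<Rightarrow> 'a set \<Rightarrow> 'a set \<Rightarrow> 'a set \<Rightarrow> bool" where
  "is_minimizer M s \<Omega> F E \<longleftrightarrow> E \<in> sets M \<and> Js M s \<Omega> E < \<infinity> \<and> E - \<Omega> = F - \<Omega> \<and>
     (\<forall>E'\<in>sets M. E' - \<Omega> = F - \<Omega> \<longrightarrow> Js M s \<Omega> E \<le> Js M s \<Omega> E')"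

end

theory Submission
  imports Defs
begin

text \<open>
  \<open>Js M s \<Omega> E\<close> is the integral of the kernel over the set of interacting pairs
  \<open>(E \<inter> \<Omega>) \<times> (UNIV - E) \<union> (E - \<Omega>) \<times> (\<Omega> - E)\<close>, whose indicator is pointwise submodular
  in \<open>E\<close>. Hence the functional is submodular, and by Fatou's lemma it is lower semicontinuous
  along pointwise convergent sequences of sets. The sets agreeing with \<open>F\<close> outside \<open>\<Omega>\<close> are
  closed under countable unions and intersections; let \<open>m\<close> be the infimum over them and take
  \<open>E\<^sub>n\<close> with value at most \<open>m + 2\<^sup>-\<^sup>n\<close>. Since the value at \<open>A \<union> B\<close> is at least \<open>m\<close>,
  submodularity bounds the value at \<open>E\<^sub>k \<inter> \<dots> \<inter> E\<^sub>k\<^sub>+\<^sub>d\<close> by \<open>m + 2\<^sup>1\<^sup>-\<^sup>k\<close>, and Fatou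
  applied twice shows that \<open>\<Union>\<^sub>k \<Inter>\<^sub>n\<^sub>\<ge>\<^sub>k E\<^sub>n\<close> attains \<open>m\<close>.

  Tonelli and Fatou need the kernel to be measurable for the product \<open>\<sigma>\<close>-algebra. This uses
  separability: in a doubling space separated subsets of a ball are finite, so balls are
  totally bounded.\<close>

lemma eventually_mem_decseq:
  assumes "decseq A"
  shows "\<forall>\<^sub>F n in sequentially. x \<in> A n \<longleftrightarrow> x \<in> (\<Inter>n. A n)"
proof (cases "x \<in> (\<Inter>n. A n)")
  case False
  then obtain n0 where "x \<notin> A n0"
    by blast
  then have "x \<notin> A n" if "n \<ge> n0" for n
    using assms that by (auto simp: decseq_def)
  then show ?thesis
    using False unfolding eventually_sequentially by blast
qed simp

lemma eventually_mem_incseq: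
  assumes "incseq A"
  shows "\<forall>\<^sub>F n in sequentially. x \<in> A n \<longleftrightarrow> x \<in> (\<Union>n. A n)"
proof (cases "x \<in> (\<Union>n. A n)")
  case True
  then obtain n0 where "x \<in> A n0"
    by blast
  then have "x \<in> A n" if "n \<ge> n0" for n
    using assms that by (auto simp: incseq_def)
  then show ?thesis
    using True unfolding eventually_sequentially by blast
qed simp

lemma geometric_partial_sum_le:
  fixes k d :: nat
  shows "(\<Sum>i\<le>d. (1/2::real) ^ (k + i)) \<le> 2 * (1/2) ^ k"
proof -
  have "(\<Sum>i\<le>d. (1/2::real) ^ i) \<le> (\<Sum>i. (1/2) ^ i)"
    by (intro sum_le_suminf summable_geometric) auto
  also have "\<dots> = 2"
    by (simp add: suminf_geometric)
  finally have "(1/2) ^ k * (\<Sum>i\<le>d. (1/2::real) ^ i) \<le> (1/2) ^ k * 2"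
    by (rule mult_left_mono) simp
  then show ?thesis
    by (simp add: power_add sum_distrib_left mult.commute)
qed

locale submodular_lsc_family =
  fixes P :: "'a set set" and J :: "'a set \<Rightarrow> ennreal"
  assumes Inter_closed: "\<And>C. countable C \<Longrightarrow> C \<noteq> {} \<Longrightarrow> C \<subseteq> P \<Longrightarrow> \<Inter>C \<in> P"
    and Union_closed: "\<And>C. countable C \<Longrightarrow> C \<noteq> {} \<Longrightarrow> C \<subseteq> P \<Longrightarrow> \<Union>C \<in> P"
    and submodular: "\<And>A B. A \<in> P \<Longrightarrow> B \<in> P \<Longrightarrow> J (A \<union> B) + J (A \<inter> B) \<le> J A + J B"
    and lsc: "\<And>G H. (\<And>n. G n \<in> P) \<Longrightarrow> H \<in> P \<Longrightarrow>
      (\<And>x. \<forall>\<^sub>F n in sequentially. x \<in> G n \<longleftrightarrow> x \<in> H) \<Longrightarrow> J H \<le> liminf (\<lambda>n. J (G n))"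
begin

lemma INT_closed: "(\<And>i. i \<in> I \<Longrightarrow> E i \<in> P) \<Longrightarrow> countable I \<Longrightarrow> I \<noteq> {} \<Longrightarrow> (\<Inter>i\<in>I. E i) \<in> P"
  by (intro Inter_closed) auto

lemma UN_closed: "(\<And>i. i \<in> I \<Longrightarrow> E i \<in> P) \<Longrightarrow> countable I \<Longrightarrow> I \<noteq> {} \<Longrightarrow> (\<Union>i\<in>I. E i) \<in> P"
  by (intro Union_closed) auto

lemma Un_closed: "A \<in> P \<Longrightarrow> B \<in> P \<Longrightarrow> A \<union> B \<in> P"
  using Union_closed[of "{A, B}"] by auto

context
  fixes m :: ennreal and E :: "nat \<Rightarrow> 'a set"
  assumes m_finite: "m \<noteq> \<infinity>" and m_le: "\<And>A. A \<in> P \<Longrightarrow> m \<le> J A"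
    and E_in: "\<And>n. E n \<in> P" and E_le: "\<And>n. J (E n) \<le> m + ennreal ((1/2) ^ n)"
begin

lemma J_INT_atMost_le: "J (\<Inter>i\<le>d. E (k + i)) \<le> m + ennreal (2 * (1/2) ^ k)"
proof -
  have "J (\<Inter>i\<le>d. E (k + i)) \<le> m + ennreal (\<Sum>i\<le>d. (1/2) ^ (k + i))"
  proof (induction d)
    case 0
    then show ?case
      using E_le[of k] by simp
  next
    case (Suc d)
    define G where "G = (\<Inter>i\<le>d. E (k + i))"
    have "G \<in> P" "G \<union> E (k + Suc d) \<in> P"
      unfolding G_def using E_in by (auto intro!: INT_closed Un_closed)
    have G_Suc: "(\<Inter>i\<le>Suc d. E (k + i)) = G \<inter> E (k + Suc d)"
      by (auto simp: G_def atMost_Suc)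
    have "m + J (G \<inter> E (k + Suc d)) \<le> J (G \<union> E (k + Suc d)) + J (G \<inter> E (k + Suc d))"
      using \<open>G \<union> E (k + Suc d) \<in> P\<close> by (intro add_right_mono m_le)
    also have "\<dots> \<le> J G + J (E (k + Suc d))"
      using \<open>G \<in> P\<close> E_in by (rule submodular)
    also have "\<dots> \<le> (m + ennreal (\<Sum>i\<le>d. (1/2) ^ (k + i))) + (m + ennreal ((1/2) ^ (k + Suc d)))"
      using Suc.IH E_le unfolding G_def by (rule add_mono)
    also have "\<dots> = m + (m + ennreal (\<Sum>i\<le>Suc d. (1/2) ^ (k + i)))"
      using ennreal_plus[of "\<Sum>i\<le>d. (1/2::real) ^ (k + i)" "(1/2) ^ (k + Suc d)"]
      by (simp add: sum_nonneg ac_simps del: ennreal_plus)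
    finally show ?case
      using m_finite unfolding G_Suc by (simp add: ennreal_add_left_cancel_le)
  qed
  also have "\<dots> \<le> m + ennreal (2 * (1/2) ^ k)"
    using geometric_partial_sum_le[of k d] by (intro add_left_mono ennreal_leI)
  finally show ?thesis .
qed

lemma J_INT_le: "J (\<Inter>i. E (k + i)) \<le> m + ennreal (2 * (1/2) ^ k)"
proof -
  define G where "G d = (\<Inter>i\<le>d. E (k + i))" for d
  have "G d \<in> P" for d
    unfolding G_def using E_in by (intro INT_closed) auto
  moreover have "(\<Inter>i. E (k + i)) \<in> P"
    using E_in by (intro INT_closed) auto
  moreover have "\<forall>\<^sub>F d in sequentially. x \<in> G d \<longleftrightarrow> x \<in> (\<Inter>i. E (k + i))" for x
  proof -
    have "decseq G" "(\<Inter>d. G d) = (\<Inter>i. E (k + i))"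
      by (auto simp: decseq_def G_def)
    then show ?thesis
      using eventually_mem_decseq[of G x] by simp
  qed
  ultimately have "J (\<Inter>i. E (k + i)) \<le> liminf (\<lambda>d. J (G d))"
    by (rule lsc)
  also have "\<dots> \<le> m + ennreal (2 * (1/2) ^ k)"
    unfolding G_def using J_INT_atMost_le by (intro Liminf_le) auto
  finally show ?thesis .
qed

lemma J_liminf_set_le: "J (\<Union>k. \<Inter>i. E (k + i)) \<le> m"
proof -
  define H where "H k = (\<Inter>i. E (k + i))" for k
  have "H k \<in> P" for k
    unfolding H_def using E_in by (intro INT_closed) auto
  moreover have "(\<Union>k. H k) \<in> P"
    using \<open>\<And>k. H k \<in> P\<close> by (intro UN_closed) auto
  moreover have "incseq H"
  proof (rule incseq_SucI)
    fix k
    have "E (Suc k + i) = E (k + Suc i)" for i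
      by simp
    then show "H k \<subseteq> H (Suc k)"
      unfolding H_def by blast
  qed
  then have "\<forall>\<^sub>F k in sequentially. x \<in> H k \<longleftrightarrow> x \<in> (\<Union>k. H k)" for x
    by (rule eventually_mem_incseq)
  ultimately have "J (\<Union>k. H k) \<le> liminf (\<lambda>k. J (H k))"
    by (rule lsc)
  also have "\<dots> \<le> liminf (\<lambda>k. m + ennreal (2 * (1/2) ^ k))"
    unfolding H_def using J_INT_le by (intro Liminf_mono) auto
  also have "\<dots> = m"
  proof (rule lim_imp_Liminf)
    have "(\<lambda>k. 2 * (1/2::real) ^ k) \<longlonglongrightarrow> 0"
      by (intro tendsto_mult_right_zero LIMSEQ_power_zero) auto
    then have "(\<lambda>k. ennreal (2 * (1/2) ^ k)) \<longlonglongrightarrow> 0"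
      by (metis ennreal_0 tendsto_ennrealI)
    then show "(\<lambda>k. m + ennreal (2 * (1/2) ^ k)) \<longlonglongrightarrow> m"
      using tendsto_add[OF tendsto_const, of _ 0 _ m] by simp
  qed simp
  finally show ?thesis
    unfolding H_def .
qed

end

lemma attains_Inf:
  assumes "P \<noteq> {}"
  shows "\<exists>E\<in>P. \<forall>E'\<in>P. J E \<le> J E'"
proof -
  define m where "m = (INF E\<in>P. J E)"
  have m_le: "m \<le> J E" if "E \<in> P" for E
    using that unfolding m_def by (rule INF_lower)
  show ?thesis
  proof (cases "m = \<infinity>")
    case True
    then show ?thesis
      using assms m_le by (auto simp: top_unique)
  next
    case False
    have "\<exists>E\<in>P. J E < m + ennreal ((1/2) ^ n)" for n
      using False by (simp add: m_def INF_less_iff[symmetric] ennreal_add_left_cancel_less[of m 0, simplified])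
    then obtain E where "\<And>n. E n \<in> P" "\<And>n. J (E n) \<le> m + ennreal ((1/2) ^ n)"
      by (metis less_imp_le)
    then have "(\<Union>k. \<Inter>i. E (k + i)) \<in> P" "J (\<Union>k. \<Inter>i. E (k + i)) \<le> m"
      using J_liminf_set_le[OF False m_le] by (auto intro!: UN_closed INT_closed)
    then show ?thesis
      using m_le by (meson order_trans)
  qed
qed

end

lemma countable_dense_if_totally_bounded_balls:
  fixes x0 :: "'a::metric_space"
  assumes "\<And>R. totally_bounded (ball x0 R)"
  shows "\<exists>D::'a set. countable D \<and> (\<forall>x e. e > 0 \<longrightarrow> (\<exists>q\<in>D. dist x q < e))"
proof -
  have "\<exists>K. finite K \<and> ball x0 (real n) \<subseteq> (\<Union>q\<in>K. ball q (1 / Suc k))" for n k :: nat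
  proof -
    have "(1::real) / Suc k > 0"
      by simp
    with assms[of "real n"] show ?thesis
      unfolding totally_bounded_metric ball_def by blast
  qed
  then obtain K where K: "\<And>n k. finite (K n k)" "\<And>n k. ball x0 (real n) \<subseteq> (\<Union>q\<in>K n k. ball q (1 / Suc k))"
    by metis
  define D where "D = (\<Union>n. \<Union>k. K n k)"
  show ?thesis
  proof (intro exI[of _ D] conjI allI impI)
    show "countable D"
      using K(1) by (simp add: D_def countable_finite)
    fix x and e :: real
    assume "e > 0"
    then obtain k where k: "1 / Suc k < e"
      using nat_approx_posE by blast
    obtain n :: nat where "dist x0 x < n"
      using reals_Archimedean2 by blast
    then obtain q where "q \<in> K n k" "dist q x < 1 / Suc k"
      using K(2)[of n k] by auto
    then show "\<exists>q\<in>D. dist x q < e"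
      using k unfolding D_def by (intro bexI[of _ q]) (auto simp: dist_commute)
  qed
qed

definition separated :: "real \<Rightarrow> 'a::metric_space set \<Rightarrow> bool" where
  "separated r T \<longleftrightarrow> (\<forall>a\<in>T. \<forall>b\<in>T. a \<noteq> b \<longrightarrow> r \<le> dist a b)"

locale metric_measure =
  fixes M :: "'a::metric_space measure"
  assumes sets_borel_subset: "sets borel \<subseteq> sets M"
begin

lemma sets_open: "open U \<Longrightarrow> U \<in> sets M"
  using sets_borel_subset by auto

lemma space_eq_UNIV: "space M = UNIV"
  using sets.sets_into_space[OF sets_open[OF open_UNIV]] by auto

lemma sets_ball [measurable]: "ball x r \<in> sets M"
  by (simp add: sets_open)

lemma borel_measurable_continuous: "continuous_on UNIV f \<Longrightarrow> f \<in> borel_measurable M"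
  by (rule borel_measurable_subalgebra[OF sets_borel_subset]) (auto simp: space_eq_UNIV borel_measurable_continuous_onI)

lemma emeasure_ball_approx_below:
  assumes "y < emeasure M (ball x q)"
  shows "\<exists>r<q. y < emeasure M (ball x r)"
proof -
  define B where "B n = ball x (q - 1 / Suc n)" for n
  have "incseq B"
    unfolding B_def by (intro incseq_SucI subset_ball) (simp add: frac_le)
  have "B n \<subseteq> ball x q" for n
    unfolding B_def by (simp add: subset_ball)
  have "(\<Union>n. B n) = ball x q"
  proof (intro equalityI subsetI)
    fix z
    assume "z \<in> ball x q"
    then obtain n where "1 / Suc n < q - dist x z"
      using nat_approx_posE[of "q - dist x z"] by auto
    then show "z \<in> (\<Union>n. B n)"
      unfolding B_def by (intro UN_I[of n]) auto
  qed (use \<open>\<And>n. B n \<subseteq> ball x q\<close> in blast)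
  moreover have "range B \<subseteq> sets M"
    by (auto simp: B_def)
  ultimately have "(SUP n. emeasure M (B n)) = emeasure M (ball x q)"
    using SUP_emeasure_incseq[of B M] \<open>incseq B\<close> by simp
  then obtain n where "y < emeasure M (B n)"
    using assms by (metis less_SUP_iff)
  then show ?thesis
    unfolding B_def by (intro exI[of _ "q - 1 / Suc n"]) auto
qed

lemma borel_measurable_emeasure_ball: "(\<lambda>x. emeasure M (ball x q)) \<in> borel_measurable M"
proof (rule borel_measurableI_greater)
  fix y
  have "open {x. y < emeasure M (ball x q)}"
    unfolding open_dist
  proof (intro ballI)
    fix x
    assume "x \<in> {x. y < emeasure M (ball x q)}"
    then obtain r where r: "r < q" "y < emeasure M (ball x r)"
      using emeasure_ball_approx_below by blast
    have "y < emeasure M (ball x' q)" if "dist x' x < q - r" for x'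
    proof -
      have "ball x r \<subseteq> ball x' q"
      proof
        fix w
        assume "w \<in> ball x r"
        moreover have "dist x' w \<le> dist x' x + dist x w"
          by (rule dist_triangle)
        ultimately show "w \<in> ball x' q"
          using that by simp
      qed
      then show ?thesis
        using r(2) emeasure_mono[of "ball x r" "ball x' q" M] by auto
    qed
    then show "\<exists>e>0. \<forall>x'. dist x' x < e \<longrightarrow> x' \<in> {x. y < emeasure M (ball x q)}"
      using r(1) by (intro exI[of _ "q - r"]) auto
  qed
  then show "{x \<in> space M. y < emeasure M (ball x q)} \<in> sets M"
    by (simp add: space_eq_UNIV sets_open)
qed

lemma borel_measurable_emeasure_ball_comp:
  assumes [measurable]: "h \<in> measurable N M" "\<rho> \<in> borel_measurable N"
  shows "(\<lambda>z. emeasure M (ball (h z) (\<rho> z))) \<in> borel_measurable N"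
proof (rule borel_measurableI_greater)
  fix y
  have [measurable]: "(\<lambda>z. emeasure M (ball (h z) q)) \<in> borel_measurable N" for q
    using measurable_compose[OF assms(1) borel_measurable_emeasure_ball] by simp
  have "{z \<in> space N. y < emeasure M (ball (h z) (\<rho> z))} =
    (\<Union>q\<in>\<rat>. {z \<in> space N. q < \<rho> z \<and> y < emeasure M (ball (h z) q)})"
  proof (intro equalityI subsetI)
    fix z
    assume "z \<in> {z \<in> space N. y < emeasure M (ball (h z) (\<rho> z))}"
    then obtain r where z: "z \<in> space N" and r: "r < \<rho> z" "y < emeasure M (ball (h z) r)"
      using emeasure_ball_approx_below by blast
    obtain q where q: "q \<in> \<rat>" "r < q" "q < \<rho> z"
      using Rats_dense_in_real[OF r(1)] by blast
    have "emeasure M (ball (h z) r) \<le> emeasure M (ball (h z) q)"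
      using q by (intro emeasure_mono) auto
    then show "z \<in> (\<Union>q\<in>\<rat>. {z \<in> space N. q < \<rho> z \<and> y < emeasure M (ball (h z) q)})"
      using q z r by (auto intro: order_less_le_trans)
  next
    fix z
    assume "z \<in> (\<Union>q\<in>\<rat>. {z \<in> space N. q < \<rho> z \<and> y < emeasure M (ball (h z) q)})"
    then obtain q where "q < \<rho> z" "y < emeasure M (ball (h z) q)" "z \<in> space N"
      by auto
    moreover have "emeasure M (ball (h z) q) \<le> emeasure M (ball (h z) (\<rho> z))"
      using \<open>q < \<rho> z\<close> by (intro emeasure_mono) auto
    ultimately show "z \<in> {z \<in> space N. y < emeasure M (ball (h z) (\<rho> z))}"
      by auto
  qed
  also have "\<dots> \<in> sets N"
    by (intro sets.countable_UN'' countable_rat) measurable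
  finally show "{z \<in> space N. y < emeasure M (ball (h z) (\<rho> z))} \<in> sets N" .
qed

lemma sum_emeasure_separated_balls_le:
  fixes T :: "'a set"
  assumes "finite T" "T \<subseteq> ball x0 R" "separated r T"
  shows "(\<Sum>t\<in>T. emeasure M (ball t (r / 2))) \<le> emeasure M (ball x0 (R + r / 2))"
proof -
  have "disjoint_family_on (\<lambda>t. ball t (r / 2)) T"
    unfolding disjoint_family_on_def
  proof (intro ballI impI)
    fix a b
    assume "a \<in> T" "b \<in> T" "a \<noteq> b"
    then have "r \<le> dist a b"
      using assms(3) by (auto simp: separated_def)
    then show "ball a (r / 2) \<inter> ball b (r / 2) = {}"
      using dist_triangle_half_l[of a _ "r" b] by (auto simp: dist_commute)
  qed
  moreover have "(\<Union>t\<in>T. ball t (r / 2)) \<subseteq> ball x0 (R + r / 2)"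
  proof clarify
    fix t w
    assume "t \<in> T" "w \<in> ball t (r / 2)"
    then have "dist x0 t < R" "dist t w < r / 2"
      using assms(2) by auto
    then show "w \<in> ball x0 (R + r / 2)"
      using dist_triangle[of x0 w t] by simp
  qed
  ultimately show ?thesis
    using sum_emeasure[of "\<lambda>t. ball t (r / 2)" T M] assms(1) emeasure_mono[of _ "ball x0 (R + r / 2)" M]
    by (simp add: image_subset_iff)
qed

text \<open>For a non-separable space the distance need not be measurable for the product
  \<sigma>-algebra; a countable dense set writes \<open>{dist < a}\<close> as a countable union of measurable sets.\<close>

lemma borel_measurable_dist_pair:
  fixes D :: "'a set"
  assumes "countable D" and dense: "\<And>x e. e > 0 \<Longrightarrow> \<exists>q\<in>D. dist x q < e"
  shows "(\<lambda>z. dist (fst z) (snd z)) \<in> borel_measurable (M \<Otimes>\<^sub>M M)"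
  unfolding borel_measurable_iff_less
proof
  fix a
  have [measurable]: "(\<lambda>x. dist x q) \<in> borel_measurable M" "(\<lambda>x. dist q x) \<in> borel_measurable M" for q
    by (intro borel_measurable_continuous continuous_on_dist continuous_on_id continuous_on_const)+
  have "{z \<in> space (M \<Otimes>\<^sub>M M). dist (fst z) (snd z) < a} =
    (\<Union>q\<in>D. {z \<in> space (M \<Otimes>\<^sub>M M). dist (fst z) q + dist q (snd z) < a})"
  proof (intro equalityI subsetI)
    fix z
    assume z: "z \<in> {z \<in> space (M \<Otimes>\<^sub>M M). dist (fst z) (snd z) < a}"
    then obtain q where "q \<in> D" "dist (fst z) q < (a - dist (fst z) (snd z)) / 2"
      using dense[of "(a - dist (fst z) (snd z)) / 2" "fst z"] by auto
    moreover have "dist q (snd z) \<le> dist q (fst z) + dist (fst z) (snd z)"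
      by (rule dist_triangle)
    ultimately have "dist (fst z) q + dist q (snd z) < a"
      by (simp add: dist_commute)
    then show "z \<in> (\<Union>q\<in>D. {z \<in> space (M \<Otimes>\<^sub>M M). dist (fst z) q + dist q (snd z) < a})"
      using z \<open>q \<in> D\<close> by blast
  next
    fix z
    assume "z \<in> (\<Union>q\<in>D. {z \<in> space (M \<Otimes>\<^sub>M M). dist (fst z) q + dist q (snd z) < a})"
    then obtain q where "z \<in> space (M \<Otimes>\<^sub>M M)" "dist (fst z) q + dist q (snd z) < a"
      by blast
    then show "z \<in> {z \<in> space (M \<Otimes>\<^sub>M M). dist (fst z) (snd z) < a}"
      using dist_triangle[of "fst z" "snd z" q] by simp
  qed
  also have "\<dots> \<in> sets (M \<Otimes>\<^sub>M M)"
    using \<open>countable D\<close> by (intro sets.countable_UN'') measurable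
  finally show "{z \<in> space (M \<Otimes>\<^sub>M M). dist (fst z) (snd z) < a} \<in> sets (M \<Otimes>\<^sub>M M)" .
qed

lemma borel_measurable_Kern:
  fixes D :: "'a set"
  assumes "countable D" and "\<And>x e. e > 0 \<Longrightarrow> \<exists>q\<in>D. dist x q < e"
  shows "(\<lambda>z. Kern M s (fst z) (snd z)) \<in> borel_measurable (M \<Otimes>\<^sub>M M)"
proof -
  note [measurable] = borel_measurable_dist_pair[OF assms]
  have [measurable]: "(\<lambda>z. emeasure M (ball (fst z) (dist (fst z) (snd z)))) \<in> borel_measurable (M \<Otimes>\<^sub>M M)"
    "(\<lambda>z. emeasure M (ball (snd z) (dist (fst z) (snd z)))) \<in> borel_measurable (M \<Otimes>\<^sub>M M)"
    by (intro borel_measurable_emeasure_ball_comp; measurable)+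
  have eq: "(\<lambda>z. Kern M s (fst z) (snd z)) = (\<lambda>z. if dist (fst z) (snd z) = 0 then \<infinity> else
     ennreal (2 / (dist (fst z) (snd z) powr s *
        (enn2real (emeasure M (ball (fst z) (dist (fst z) (snd z)))) +
         enn2real (emeasure M (ball (snd z) (dist (fst z) (snd z))))))))"
    by (auto simp: Kern_def measure_def dist_commute)
  show ?thesis
    unfolding eq by measurable
qed

end

definition Js_pairs :: "'a set \<Rightarrow> 'a set \<Rightarrow> ('a \<times> 'a) set" where
  "Js_pairs \<Omega> E = (E \<inter> \<Omega>) \<times> (UNIV - E) \<union> (E - \<Omega>) \<times> (\<Omega> - E)"

lemma indicator_Js_pairs_submodular:
  "indicator (Js_pairs \<Omega> (E \<union> F)) z + indicator (Js_pairs \<Omega> (E \<inter> F)) z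
    \<le> (indicator (Js_pairs \<Omega> E) z + indicator (Js_pairs \<Omega> F) z :: ennreal)"
  by (auto simp: Js_pairs_def indicator_def)

locale doubling_metric_measure = metric_measure +
  fixes C :: real
  assumes doubling_const_ge_1: "C \<ge> 1"
    and emeasure_ball_pos: "\<And>x r. r > 0 \<Longrightarrow> 0 < emeasure M (ball x r)"
    and emeasure_ball_finite: "\<And>x r. emeasure M (ball x r) < \<infinity>"
    and emeasure_ball_double_le:
      "\<And>x r. r > 0 \<Longrightarrow> emeasure M (ball x (2 * r)) \<le> ennreal C * emeasure M (ball x r)"
begin

lemma emeasure_ball_power_double_le:
  assumes "r > 0"
  shows "emeasure M (ball x (2 ^ n * r)) \<le> ennreal (C ^ n) * emeasure M (ball x r)"
proof (induction n)
  case (Suc n)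
  have "emeasure M (ball x (2 ^ Suc n * r)) \<le> ennreal C * emeasure M (ball x (2 ^ n * r))"
    using emeasure_ball_double_le[of "2 ^ n * r" x] assms by (simp add: mult.assoc)
  also have "\<dots> \<le> ennreal C * (ennreal (C ^ n) * emeasure M (ball x r))"
    using Suc.IH by (rule mult_left_mono) simp
  also have "\<dots> = ennreal (C ^ Suc n) * emeasure M (ball x r)"
    using doubling_const_ge_1 by (simp add: ennreal_mult' mult.assoc)
  finally show ?case .
qed simp

lemma sigma_finite: "sigma_finite_measure M"
proof
  fix x0 :: 'a
  show "\<exists>A. countable A \<and> A \<subseteq> sets M \<and> \<Union>A = space M \<and> (\<forall>a\<in>A. emeasure M a \<noteq> \<infinity>)"
  proof (intro exI[of _ "range (\<lambda>n::nat. ball x0 (real n))"] conjI)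
    show "\<Union>(range (\<lambda>n::nat. ball x0 (real n))) = space M"
      using reals_Archimedean2 by (auto simp: space_eq_UNIV)
  qed (use emeasure_ball_finite in \<open>auto simp: less_top\<close>)
qed

text \<open>The balls of radius \<open>r/2\<close> around the points of \<open>T\<close> are disjoint, lie in a ball \<open>B\<close>,
  and each has measure at least \<open>C\<^sup>-\<^sup>n \<mu>(B)\<close>.\<close>

lemma card_separated_le:
  fixes T :: "'a set"
  assumes "r > 0" "finite T" "T \<subseteq> ball x0 R" "separated r T" "2 * R + r \<le> 2 ^ n * (r / 2)"
  shows "real (card T) \<le> C ^ n"
proof (cases "T = {}")
  case False
  define B where "B = ball x0 (R + r / 2)"
  have B_le: "emeasure M B \<le> ennreal (C ^ n) * emeasure M (ball t (r / 2))" if "t \<in> T" for t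
  proof -
    have "dist x0 t < R"
      using that assms(3) by auto
    have "B \<subseteq> ball t (2 ^ n * (r / 2))"
    proof
      fix w
      assume "w \<in> B"
      then show "w \<in> ball t (2 ^ n * (r / 2))"
        using \<open>dist x0 t < R\<close> dist_triangle[of t w x0] assms(1,5) by (simp add: B_def dist_commute)
    qed
    then have "emeasure M B \<le> emeasure M (ball t (2 ^ n * (r / 2)))"
      by (intro emeasure_mono) auto
    also have "\<dots> \<le> ennreal (C ^ n) * emeasure M (ball t (r / 2))"
      using \<open>r > 0\<close> by (intro emeasure_ball_power_double_le) simp
    finally show ?thesis .
  qed
  have "of_nat (card T) * emeasure M B = (\<Sum>t\<in>T. emeasure M B)"
    by simp
  also have "\<dots> \<le> (\<Sum>t\<in>T. ennreal (C ^ n) * emeasure M (ball t (r / 2)))"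
    using B_le by (rule sum_mono)
  also have "\<dots> \<le> ennreal (C ^ n) * emeasure M B"
    using sum_emeasure_separated_balls_le[OF assms(2-4)]
    by (simp add: B_def sum_distrib_left[symmetric] mult_left_mono)
  finally have "emeasure M B * ennreal (real (card T)) \<le> emeasure M B * ennreal (C ^ n)"
    by (simp add: ennreal_of_nat_eq_real_of_nat mult.commute)
  moreover obtain t where "t \<in> T"
    using False by blast
  then have "dist x0 t < R"
    using assms(3) by auto
  then have "R > 0"
    by (meson le_less_trans zero_le_dist)
  then have "emeasure M B \<noteq> 0" "emeasure M B \<noteq> \<infinity>"
    using emeasure_ball_pos[of "R + r / 2" x0] emeasure_ball_finite[of x0 "R + r / 2"] assms(1)
    by (auto simp: B_def)
  ultimately show ?thesis
    using doubling_const_ge_1 by (simp add: ennreal_mult_le_mult_iff)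
qed (use doubling_const_ge_1 in simp)

lemma totally_bounded_ball:
  fixes x0 :: 'a
  shows "totally_bounded (ball x0 R)"
  unfolding totally_bounded_metric
proof (intro allI impI)
  fix r :: real
  assume "r > 0"
  obtain n :: nat where "(2 * R + r) / (r / 2) < 2 ^ n"
    using real_arch_pow[of 2] by auto
  then have n: "2 * R + r \<le> 2 ^ n * (r / 2)"
    using \<open>r > 0\<close> by (simp add: field_simps)
  define net where "net T \<longleftrightarrow> finite T \<and> T \<subseteq> ball x0 R \<and> separated r T" for T
  have card_net: "card T < nat \<lceil>C ^ n\<rceil> + 1" if "net T" for T
  proof -
    have "finite T" "T \<subseteq> ball x0 R" "separated r T"
      using that by (simp_all add: net_def)
    then have "real (card T) \<le> C ^ n"
      using n by (rule card_separated_le[OF \<open>r > 0\<close>])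
    then have "real (card T) \<le> real (nat \<lceil>C ^ n\<rceil>)"
      using real_nat_ceiling_ge[of "C ^ n"] by linarith
    then show ?thesis
      by simp
  qed
  have "net {}"
    by (simp add: net_def separated_def)
  from ex_has_greatest_nat[of net "{}" card "nat \<lceil>C ^ n\<rceil> + 1"] this card_net
  obtain T where T: "net T" and T_max: "\<And>T'. net T' \<Longrightarrow> card T' \<le> card T"
    by blast
  have "ball x0 R \<subseteq> (\<Union>t\<in>T. {y. dist t y < r})"
  proof (rule subsetI, rule ccontr)
    fix z
    assume z: "z \<in> ball x0 R" "z \<notin> (\<Union>t\<in>T. {y. dist t y < r})"
    then have far: "r \<le> dist t z" "r \<le> dist z t" if "t \<in> T" for t
      using that by (auto simp: dist_commute)
    then have "z \<notin> T"
      using \<open>r > 0\<close> by fastforce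
    moreover have "net (insert z T)"
      using T z(1) far unfolding net_def separated_def by blast
    ultimately show False
      using T_max[of "insert z T"] T by (simp add: net_def)
  qed
  then show "\<exists>k. finite k \<and> ball x0 R \<subseteq> (\<Union>t\<in>k. {y. dist t y < r})"
    using T by (auto simp: net_def)
qed

lemma countable_dense: "\<exists>D::'a set. countable D \<and> (\<forall>x e. e > 0 \<longrightarrow> (\<exists>q\<in>D. dist x q < e))"
  using countable_dense_if_totally_bounded_balls totally_bounded_ball by blast

lemma borel_measurable_Kern_pair: "(\<lambda>z. Kern M s (fst z) (snd z)) \<in> borel_measurable (M \<Otimes>\<^sub>M M)"
  using countable_dense borel_measurable_Kern by blast

lemma sets_Compl_UNIV [measurable]: "A \<in> sets M \<Longrightarrow> UNIV - A \<in> sets M"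
  using sets.compl_sets[of A M] by (simp add: space_eq_UNIV)

lemma sets_Js_pairs:
  "\<Omega> \<in> sets M \<Longrightarrow> E \<in> sets M \<Longrightarrow> Js_pairs \<Omega> E \<in> sets (M \<Otimes>\<^sub>M M)"
  unfolding Js_pairs_def by (intro sets.Un pair_measureI sets.Int sets.Diff sets_Compl_UNIV)

lemma borel_measurable_Kern_Js_pairs:
  assumes "\<Omega> \<in> sets M" "E \<in> sets M"
  shows "(\<lambda>z. Kern M s (fst z) (snd z) * indicator (Js_pairs \<Omega> E) z) \<in> borel_measurable (M \<Otimes>\<^sub>M M)"
  by (intro borel_measurable_times_ennreal borel_measurable_Kern_pair borel_measurable_indicator
      sets_Js_pairs assms)

lemma Ls_eq_nn_integral_pair:
  assumes [measurable]: "A \<in> sets M" "B \<in> sets M"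
  shows "Ls M s A B = (\<integral>\<^sup>+z\<in>A \<times> B. Kern M s (fst z) (snd z) \<partial>(M \<Otimes>\<^sub>M M))"
proof -
  interpret sigma_finite_measure M
    by (rule sigma_finite)
  note [measurable] = borel_measurable_Kern_pair[of s]
  have "Ls M s A B = (\<integral>\<^sup>+x. \<integral>\<^sup>+y. Kern M s x y * indicator (A \<times> B) (x, y) \<partial>M \<partial>M)"
    unfolding Ls_def
  proof (intro nn_integral_cong)
    fix x
    show "(\<integral>\<^sup>+y. Kern M s x y * indicator B y \<partial>M) * indicator A x =
      (\<integral>\<^sup>+y. Kern M s x y * indicator (A \<times> B) (x, y) \<partial>M)"
      by (cases "x \<in> A") (auto simp: indicator_times)
  qed
  also have "\<dots> = (\<integral>\<^sup>+z\<in>A \<times> B. Kern M s (fst z) (snd z) \<partial>(M \<Otimes>\<^sub>M M))"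
    using nn_integral_fst[of "\<lambda>z. Kern M s (fst z) (snd z) * indicator (A \<times> B) z" M] by simp
  finally show ?thesis .
qed

lemma Js_eq_nn_integral_pair:
  assumes [measurable]: "\<Omega> \<in> sets M" "E \<in> sets M"
  shows "Js M s \<Omega> E = (\<integral>\<^sup>+z\<in>Js_pairs \<Omega> E. Kern M s (fst z) (snd z) \<partial>(M \<Otimes>\<^sub>M M))"
proof -
  note [measurable] = borel_measurable_Kern_pair[of s]
  let ?K = "\<lambda>z. Kern M s (fst z) (snd z)"
  have "Js M s \<Omega> E = (\<integral>\<^sup>+z. ?K z * indicator ((E \<inter> \<Omega>) \<times> (UNIV - E)) z
      + ?K z * indicator ((E - \<Omega>) \<times> (\<Omega> - E)) z \<partial>(M \<Otimes>\<^sub>M M))"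
    unfolding Js_def by (simp add: Ls_eq_nn_integral_pair nn_integral_add)
  also have "\<dots> = (\<integral>\<^sup>+z\<in>Js_pairs \<Omega> E. ?K z \<partial>(M \<Otimes>\<^sub>M M))"
    by (intro nn_integral_cong) (auto simp: Js_pairs_def indicator_def)
  finally show ?thesis .
qed

lemma Js_submodular:
  assumes [measurable]: "\<Omega> \<in> sets M" "E \<in> sets M" "F \<in> sets M"
  shows "Js M s \<Omega> (E \<union> F) + Js M s \<Omega> (E \<inter> F) \<le> Js M s \<Omega> E + Js M s \<Omega> F"
proof -
  note [measurable] = borel_measurable_Kern_pair[of s]
  let ?K = "\<lambda>z. Kern M s (fst z) (snd z)"
  have "Js M s \<Omega> (E \<union> F) + Js M s \<Omega> (E \<inter> F) =
    (\<integral>\<^sup>+z. ?K z * (indicator (Js_pairs \<Omega> (E \<union> F)) z + indicator (Js_pairs \<Omega> (E \<inter> F)) z) \<partial>(M \<Otimes>\<^sub>M M))"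
    by (simp add: Js_eq_nn_integral_pair nn_integral_add borel_measurable_Kern_Js_pairs distrib_left)
  also have "\<dots> \<le> (\<integral>\<^sup>+z. ?K z * (indicator (Js_pairs \<Omega> E) z + indicator (Js_pairs \<Omega> F) z) \<partial>(M \<Otimes>\<^sub>M M))"
    by (intro nn_integral_mono mult_left_mono indicator_Js_pairs_submodular) simp
  also have "\<dots> = Js M s \<Omega> E + Js M s \<Omega> F"
    by (simp add: Js_eq_nn_integral_pair nn_integral_add borel_measurable_Kern_Js_pairs distrib_left)
  finally show ?thesis .
qed

lemma Js_le_liminf:
  assumes [measurable]: "\<Omega> \<in> sets M" "H \<in> sets M" "\<And>n. G n \<in> sets M"
    and lim: "\<And>x. \<forall>\<^sub>F n in sequentially. x \<in> G n \<longleftrightarrow> x \<in> H"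
  shows "Js M s \<Omega> H \<le> liminf (\<lambda>n. Js M s \<Omega> (G n))"
proof -
  note [measurable] = borel_measurable_Kern_pair[of s]
  let ?K = "\<lambda>z. Kern M s (fst z) (snd z)"
  have "liminf (\<lambda>n. ?K z * indicator (Js_pairs \<Omega> (G n)) z) = ?K z * indicator (Js_pairs \<Omega> H) z" for z
  proof (rule lim_imp_Liminf)
    have "\<forall>\<^sub>F n in sequentially. (fst z \<in> G n \<longleftrightarrow> fst z \<in> H) \<and> (snd z \<in> G n \<longleftrightarrow> snd z \<in> H)"
      using lim[of "fst z"] lim[of "snd z"] by (rule eventually_conj)
    then have "\<forall>\<^sub>F n in sequentially.
      ?K z * indicator (Js_pairs \<Omega> (G n)) z = ?K z * indicator (Js_pairs \<Omega> H) z"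
      by eventually_elim (auto simp: Js_pairs_def indicator_def)
    then show "(\<lambda>n. ?K z * indicator (Js_pairs \<Omega> (G n)) z) \<longlonglongrightarrow> ?K z * indicator (Js_pairs \<Omega> H) z"
      by (rule tendsto_eventually)
  qed simp
  then have "Js M s \<Omega> H = (\<integral>\<^sup>+z. liminf (\<lambda>n. ?K z * indicator (Js_pairs \<Omega> (G n)) z) \<partial>(M \<Otimes>\<^sub>M M))"
    by (simp add: Js_eq_nn_integral_pair)
  also have "\<dots> \<le> liminf (\<lambda>n. Js M s \<Omega> (G n))"
    unfolding Js_eq_nn_integral_pair[OF assms(1,3)]
    by (intro nn_integral_liminf borel_measurable_Kern_Js_pairs assms)
  finally show ?thesis .
qed

lemma submodular_lsc_family_Js:
  assumes "\<Omega> \<in> sets M"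
  shows "submodular_lsc_family {E \<in> sets M. E - \<Omega> = F - \<Omega>} (Js M s \<Omega>)"
proof
  show "\<Inter>C \<in> {E \<in> sets M. E - \<Omega> = F - \<Omega>}" "\<Union>C \<in> {E \<in> sets M. E - \<Omega> = F - \<Omega>}"
    if "countable C" "C \<noteq> {}" "C \<subseteq> {E \<in> sets M. E - \<Omega> = F - \<Omega>}" for C
    using that sets.countable_INT'[where M=M and X=C and A="\<lambda>E. E"]
      sets.countable_UN'[where M=M and X=C and A="\<lambda>E. E"]
    by auto
qed (use assms in \<open>auto intro: Js_submodular Js_le_liminf\<close>)

end

lemma doubling_metric_measureI:
  assumes "sets borel \<subseteq> sets M" "doubling_measure M"
  obtains C where "doubling_metric_measure M C"
proof -
  obtain C :: real where "C \<ge> 1" and C: "\<forall>x r. r > 0 \<longrightarrow>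
      0 < emeasure M (ball x (2 * r)) \<and>
      emeasure M (ball x (2 * r)) \<le> ennreal C * emeasure M (ball x r) \<and>
      emeasure M (ball x r) < \<infinity>"
    using assms(2) unfolding doubling_measure_def by blast
  have "doubling_metric_measure M C"
  proof
    show "sets borel \<subseteq> sets M" "C \<ge> 1"
      by (fact assms(1) \<open>C \<ge> 1\<close>)+
    fix x :: 'a and r :: real
    show "emeasure M (ball x r) < \<infinity>"
    proof (cases "r > 0")
      case False
      then have "ball x r = {}"
        by simp
      then show ?thesis
        by (simp del: ball_eq_empty)
    qed (use C in blast)
    assume "r > 0"
    then show "emeasure M (ball x (2 * r)) \<le> ennreal C * emeasure M (ball x r)"
      using C by blast
    show "0 < emeasure M (ball x r)"
      using C \<open>r > 0\<close> half_gt_zero[of r] field_sum_of_halves[of r] by (metis mult_2)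
  qed
  then show ?thesis
    by (rule that)
qed

theorem theorem5p3:
  fixes M :: "('a::complete_space) measure" and \<Omega> F :: "'a set" and s :: real
  assumes "space M = UNIV"
    and "doubling_measure M"
    and "borel_regular M"
    and "domain \<Omega>" and "bounded \<Omega>"
    and "0 < s" and "s < 1"
    and "F \<in> sets M" and "F - \<Omega> \<noteq> {}"
    and "admissible M s \<Omega> F \<noteq> {}"
  shows "\<exists>E. is_minimizer M s \<Omega> F E"
proof -
  obtain C where "doubling_metric_measure M C"
    using assms(2,3) doubling_metric_measureI unfolding borel_regular_def by blast
  then interpret doubling_metric_measure M C .
  have "\<Omega> \<in> sets M"
    using assms(4) by (simp add: domain_def sets_open)
  then interpret submodular_lsc_family "{E \<in> sets M. E - \<Omega> = F - \<Omega>}" "Js M s \<Omega>"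
    by (rule submodular_lsc_family_Js)
  obtain E where E: "E \<in> sets M" "E - \<Omega> = F - \<Omega>"
    and E_min: "\<And>E'. E' \<in> sets M \<Longrightarrow> E' - \<Omega> = F - \<Omega> \<Longrightarrow> Js M s \<Omega> E \<le> Js M s \<Omega> E'"
    using attains_Inf assms(8) by blast
  obtain E0 where "E0 \<in> sets M" "E0 - \<Omega> = F - \<Omega>" "Js M s \<Omega> E0 < \<infinity>"
    using assms(10) by (auto simp: admissible_def)
  then have "Js M s \<Omega> E < \<infinity>"
    using E_min by (meson order.strict_trans1)
  then show ?thesis
    using E E_min unfolding is_minimizer_def by blast
qed

end
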